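(* Let $N\ge0$ be an even integer and let $a=(a_0,a_1,\dots,a_N)\in\mathbb N^{N+1}$ satisfy $a_0\le a_1\le\dots\le a_N$, $a_0<a_2<a_4<\cdots$ and $a_1<a_3<a_5<\cdots$. Let $\mathcal J=\{i\in[0,N]: a_i$ appears exactly once in the sequence $a\}$; then $\mathcal J=\{i_0<i_1<\dots<i_{2M}\}$ for some $M\in\mathbb N$ with $i_s\equiv s\pmod 2$, and $i_{s+1}=i_s+2m_s+1$ with $m_s\in\mathbb N$ for $s\in[0,2M-1]$. Let $\mathcal E$ be the set of $b=(b_0,\dots,b_N)\in\mathbb N^{N+1}$ with $b_0<b_2<b_4<\cdots$, $b_1<b_3<b_5<\cdots$ and such that the multisets $\{b_0,\dots,b_N\}$ and $\{a_0,\dots,a_N\}$ coincide. For $b\in\mathcal E$ let $\hat b=(b_0,b_1+1,b_2+1,b_3+2,b_4+2,\dots,b_{N-1}+N/2,b_N+N/2)$, i.e. $\hat b_i=b_i+\lceil i/2\rceil$. For $X\subset\{1,3,\dots,2M-1\}$ define $a^X\in\mathcal E$ by: for $s\in X$, $(a^X_{i_s},a^X_{i_s+1},a^X_{i_s+2},a^X_{i_s+3},\dots,a^X_{i_s+2m_s},a^X_{i_s+2m_s+1})=(a_{i_s+1},a_{i_s},a_{i_s+3},a_{i_s+2},\dots,a_{i_s+2m_s+1},a_{i_s+2m_s})$, and $a^X_i=a_i$ for all other $i\in[0,N]$. If $b\in\mathcal E$ is such that the multiset $\{\hat b_0,\dots,\hat b_N\}$ equals the multiset $\{\hat a_0,\dots,\hat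 a_N\}$, then there exists $X\subset\{1,3,\dots,2M-1\}$ with $b=a^X$. *)

theory Defs
  imports Main "HOL-Library.Multiset"
begin

definition parity_strict :: "nat list \<Rightarrow> bool" where
  "parity_strict b \<longleftrightarrow> (\<forall>i. i + 2 < length b \<longrightarrow> b ! i < b ! (i + 2))"

definition E_set :: "nat list \<Rightarrow> nat list set" where
  "E_set a = {b. length b = length a \<and> parity_strict b \<and> mset b = mset a}"

definition hat :: "nat list \<Rightarrow> nat list" where
  "hat b = map (\<lambda>i. b ! i + (i + 1) div 2) [0..<length b]"

definition Jset :: "nat list \<Rightarrow> nat set" where
  "Jset a = {i. i < length a \<and> count (mset a) (a ! i) = 1}"

definition idx :: "nat list \<Rightarrow> nat \<Rightarrow> nat" where
  "idx a s = sorted_list_of_set (Jset a) ! s"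

definition mm :: "nat list \<Rightarrow> nat \<Rightarrow> nat" where
  "mm a s = (idx a (s + 1) - idx a s - 1) div 2"

definition MM :: "nat list \<Rightarrow> nat" where
  "MM a = (card (Jset a) - 1) div 2"

definition aX :: "nat list \<Rightarrow> nat set \<Rightarrow> nat list" where
  "aX a X = map (\<lambda>i.
      if (\<exists>s\<in>X. idx a s \<le> i \<and> i \<le> idx a s + 2 * mm a s + 1 \<and> even (i - idx a s))
      then a ! (i + 1)
      else if (\<exists>s\<in>X. idx a s \<le> i \<and> i \<le> idx a s + 2 * mm a s + 1 \<and> odd (i - idx a s))
      then a ! (i - 1)
      else a ! i) [0..<length a]"

end

theory Submission
  imports Defs
begin

(*
  Since a is sorted with a_i < a_{i+2}, each value occurs at most twice, and then at adjacent
  positions: [0, N] splits into the singletons of J and adjacent equal pairs, and counting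
  positions gives i_s = s (mod 2) and |J| odd.

  hat shifts the k-th pair (b_{2k-1}, b_{2k}) by k. Matching hat b against hat a from the smallest
  value upwards shows b_0 = a_0 and that every such pair of b is the corresponding pair of a,
  possibly transposed. Strictness of b propagates a genuine transposition forward from an odd i_s
  up to i_{s+1}, and backward to the nearest element of J, which is then an odd i_s with
  b_{i_s} \<noteq> a_{i_s}. Hence b = a^X for X the set of those s.
*)

fun shift_pairs :: "nat \<Rightarrow> nat list \<Rightarrow> nat list" where
  "shift_pairs c [] = []"
| "shift_pairs c [x] = [x + c]"
| "shift_pairs c (x # y # xs) = (x + c) # (y + c) # shift_pairs (Suc c) xs"

lemma length_shift_pairs [simp]: "length (shift_pairs c xs) = length xs"
  by (induction c xs rule: shift_pairs.induct) auto

lemma nth_shift_pairs: "i < length xs \<Longrightarrow> shift_pairs c xs ! i = xs ! i + c + i div 2"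
proof (induction c xs arbitrary: i rule: shift_pairs.induct)
  case (3 c x y xs)
  then show ?case
    by (auto simp: nth_Cons split: nat.split)
qed auto

lemma shift_pairs_lower_bound: "v \<in> set (shift_pairs c xs) \<Longrightarrow> \<exists>x\<in>set xs. x + c \<le> v"
  by (induction c xs rule: shift_pairs.induct) force+

lemma not_in_shift_pairs_Suc:
  "\<forall>x\<in>set xs. v \<le> x \<Longrightarrow> v + c \<notin> set (shift_pairs (Suc c) xs)"
  using shift_pairs_lower_bound by fastforce

lemma hat_Cons: "hat (x # xs) = x # shift_pairs 1 xs"
  by (rule nth_equalityI) (auto simp: hat_def nth_Cons' nth_shift_pairs simp del: upt_Suc)

lemma parity_strict_ConsD: "parity_strict (x # xs) \<Longrightarrow> parity_strict xs"
  unfolding parity_strict_def by (metis Suc_less_eq add_Suc length_Cons nth_Cons_Suc)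

lemma parity_strict_nth_less:
  assumes "parity_strict xs" "i + 2 * d < length xs" "0 < d"
  shows "xs ! i < xs ! (i + 2 * d)"
  using assms(2,3)
proof (induction d)
  case (Suc d)
  have step: "xs ! (i + 2 * d) < xs ! (i + 2 * Suc d)"
    using assms(1) Suc.prems(1) unfolding parity_strict_def by simp
  show ?case
    using Suc step by (cases "d = 0") auto
qed simp

lemma parity_strict_min_less_tail:
  assumes "parity_strict (p # q # xs)" "z \<in> set xs"
  shows "min p q < z"
proof -
  obtain j where j: "j < length xs" "z = xs ! j"
    using assms(2) by (auto simp: in_set_conv_nth)
  have "(p # q # xs) ! (j mod 2) < (p # q # xs) ! (j mod 2 + 2 * (j div 2 + 1))"
    by (rule parity_strict_nth_less[OF assms(1)]) (use j in auto)
  moreover have "(p # q # xs) ! (j mod 2) \<in> {p, q}"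
    by (simp add: mod2_eq_if)
  ultimately show ?thesis
    using j by auto
qed

lemma min_eq_head_of_sorted:
  assumes "sorted (x # xs)" "parity_strict (p # q # ys)" "mset (p # q # ys) = mset (x # xs)"
  shows "min p q = x"
proof -
  note set_eq = mset_eq_setD[OF assms(3)]
  have "x \<le> min p q"
    using set_eq assms(1) by auto
  then have "x \<notin> set ys"
    using parity_strict_min_less_tail[OF assms(2)] by fastforce
  moreover have "x \<in> set (p # q # ys)"
    using set_eq by simp
  ultimately show ?thesis
    using \<open>x \<le> min p q\<close> by (auto simp: min_def)
qed

lemma shift_pairs_mset_eq_head_pair:
  assumes "sorted (x # y # xs)" "parity_strict (p # q # ys)"
    and mset: "mset (p # q # ys) = mset (x # y # xs)"
    and shifted: "mset (shift_pairs c (p # q # ys)) = mset (shift_pairs c (x # y # xs))"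
  shows "p = x \<and> q = y \<or> p = y \<and> q = x"
proof -
  define w where "w = max p q"
  have pq: "p = x \<and> q = w \<or> p = w \<and> q = x"
    using min_eq_head_of_sorted[OF assms(1,2) mset] by (auto simp: w_def min_def max_def)
  then have mset_w: "mset (w # ys) = mset (y # xs)"
    using mset by auto
  have "w = y"
  proof (rule ccontr)
    \<comment> \<open>Otherwise \<open>y\<close> lies in \<open>ys\<close>, whose shifted values all exceed \<open>y + c\<close>.\<close>
    assume "w \<noteq> y"
    then have "y \<in> set ys"
      using mset_eq_setD[OF mset_w] by auto
    then have "x < y"
      using parity_strict_min_less_tail[OF assms(2)] min_eq_head_of_sorted[OF assms(1,2) mset] by auto
    have "\<forall>z\<in>set ys. y \<le> z"
      using mset_eq_setD[OF mset_w] assms(1) by auto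
    then have "y + c \<notin> set (shift_pairs (Suc c) ys)"
      by (rule not_in_shift_pairs_Suc)
    moreover have "y + c \<in> set (shift_pairs c (p # q # ys))"
      using mset_eq_setD[OF shifted] by simp
    ultimately have "y \<in> {p, q}"
      by auto
    then show False
      using pq \<open>w \<noteq> y\<close> \<open>x < y\<close> by auto
  qed
  then show ?thesis
    using pq by auto
qed

lemma shift_pairs_mset_eq_pairs_permuted:
  assumes "even (length xs)" "sorted xs" "parity_strict ys" "mset ys = mset xs"
    "mset (shift_pairs c ys) = mset (shift_pairs c xs)" "even i" "i + 1 < length xs"
  shows "ys ! i = xs ! i \<and> ys ! (i + 1) = xs ! (i + 1)
       \<or> ys ! i = xs ! (i + 1) \<and> ys ! (i + 1) = xs ! i"
  using assms
proof (induction c xs arbitrary: ys i rule: shift_pairs.induct)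
  case (3 c x y xs)
  have "length ys = length (x # y # xs)"
    using "3.prems"(4) by (rule mset_eq_length)
  then obtain p q ys' where ys: "ys = p # q # ys'"
    by (auto simp: length_Suc_conv)
  have head: "p = x \<and> q = y \<or> p = y \<and> q = x"
    using shift_pairs_mset_eq_head_pair "3.prems"(2-5) ys by blast
  then have "mset ys' = mset xs" "mset (shift_pairs (Suc c) ys') = mset (shift_pairs (Suc c) xs)"
    using "3.prems"(4,5) ys by auto
  moreover have "parity_strict ys'"
    using "3.prems"(3) ys by (blast dest: parity_strict_ConsD)
  ultimately have tail: "even j \<Longrightarrow> j + 1 < length xs \<Longrightarrow>
      ys' ! j = xs ! j \<and> ys' ! (j + 1) = xs ! (j + 1) \<or> ys' ! j = xs ! (j + 1) \<and> ys' ! (j + 1) = xs ! j"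
    for j
    using "3.IH" "3.prems"(1,2) by simp
  show ?case
  proof (cases "i = 0")
    case True
    then show ?thesis
      using head ys by auto
  next
    case False
    define j where "j = i - 2"
    have i: "i = Suc (Suc j)"
      using False "3.prems"(6) unfolding j_def by presburger
    then have "even j" "j + 1 < length xs"
      using "3.prems"(6,7) by auto
    then show ?thesis
      using tail[of j] ys i by simp
  qed
qed auto

lemma hat_mset_eq_pairs_permuted:
  assumes "odd (length a)" "sorted a" "parity_strict b" "mset b = mset a"
    "mset (hat b) = mset (hat a)"
  shows "b ! 0 = a ! 0"
    and "odd i \<Longrightarrow> i + 1 < length a \<Longrightarrow>
      b ! i = a ! i \<and> b ! (i + 1) = a ! (i + 1) \<or> b ! i = a ! (i + 1) \<and> b ! (i + 1) = a ! i"
proof -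
  obtain x xs where a: "a = x # xs"
    using assms(1) by (cases a) auto
  obtain y ys where b: "b = y # ys"
    using assms(1,4) mset_eq_length by (cases b) fastforce+
  have "\<forall>z\<in>set ys. x \<le> z"
    using mset_eq_setD[OF assms(4)] assms(2) a b by auto
  then have "x + 0 \<notin> set (shift_pairs (Suc 0) ys)"
    by (rule not_in_shift_pairs_Suc)
  moreover have "x \<in> set (hat b)"
    using mset_eq_setD[OF assms(5)] a by (simp add: hat_Cons)
  ultimately have "y = x"
    using b by (simp add: hat_Cons)
  then show "b ! 0 = a ! 0"
    using a b by simp
  assume i: "odd i" "i + 1 < length a"
  have "mset ys = mset xs" "mset (shift_pairs 1 ys) = mset (shift_pairs 1 xs)"
    using assms(4,5) a b \<open>y = x\<close> by (simp_all add: hat_Cons)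
  then have "ys ! (i - 1) = xs ! (i - 1) \<and> ys ! i = xs ! i \<or> ys ! (i - 1) = xs ! i \<and> ys ! i = xs ! (i - 1)"
    using shift_pairs_mset_eq_pairs_permuted[of xs ys 1 "i - 1"] assms(1,2,3) a b i
    by (simp add: parity_strict_ConsD)
  then show "b ! i = a ! i \<and> b ! (i + 1) = a ! (i + 1) \<or> b ! i = a ! (i + 1) \<and> b ! (i + 1) = a ! i"
    using a b i by (cases i) auto
qed

lemma finite_Jset: "finite (Jset a)"
  by (simp add: Jset_def)

lemma Jset_less_length: "i \<in> Jset a \<Longrightarrow> i < length a"
  by (simp add: Jset_def)

lemma sorted_list_of_Jset:
  "sorted_wrt (<) (sorted_list_of_set (Jset a))"
  "length (sorted_list_of_set (Jset a)) = card (Jset a)"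
  "set (sorted_list_of_set (Jset a)) = Jset a"
  using finite_Jset by auto

lemma idx_in_Jset: "s < card (Jset a) \<Longrightarrow> idx a s \<in> Jset a"
  unfolding idx_def by (metis nth_mem sorted_list_of_Jset(2,3))

lemma idx_strict_mono: "s < t \<Longrightarrow> t < card (Jset a) \<Longrightarrow> idx a s < idx a t"
  unfolding idx_def by (metis sorted_list_of_Jset(1,2) sorted_wrt_nth_less)

lemma idx_less_idx_iff:
  "s < card (Jset a) \<Longrightarrow> t < card (Jset a) \<Longrightarrow> idx a s < idx a t \<longleftrightarrow> s < t"
  using idx_strict_mono by (metis less_asym linorder_neqE_nat)

lemma Jset_eq_idx: "i \<in> Jset a \<Longrightarrow> \<exists>s < card (Jset a). idx a s = i"
  unfolding idx_def by (metis in_set_conv_nth sorted_list_of_Jset(2,3))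

lemma card_Jset_below_idx:
  assumes "s < card (Jset a)"
  shows "card (Jset a \<inter> {..<idx a s}) = s"
proof -
  have "Jset a \<inter> {..<idx a s} = idx a ` {..<s}"
  proof (intro equalityI subsetI)
    fix i assume i: "i \<in> Jset a \<inter> {..<idx a s}"
    then obtain t where t: "t < card (Jset a)" "i = idx a t"
      using Jset_eq_idx by (metis IntD1)
    then have "t < s"
      using idx_less_idx_iff[OF t(1) assms] i by simp
    then show "i \<in> idx a ` {..<s}"
      using t(2) by simp
  next
    fix i assume "i \<in> idx a ` {..<s}"
    then obtain t where "t < s" "i = idx a t"
      by auto
    then show "i \<in> Jset a \<inter> {..<idx a s}"
      using idx_in_Jset[of t] idx_strict_mono[OF _ assms] assms by simp
  qed
  moreover have "strict_mono_on {..<card (Jset a)} (idx a)"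
    by (rule strict_mono_onI) (simp add: idx_strict_mono)
  then have "inj_on (idx a) {..<s}"
    using assms by (auto dest: strict_mono_on_imp_inj_on intro: inj_on_subset)
  ultimately show ?thesis
    by (simp add: card_image)
qed

lemma not_in_Jset_between_idx:
  assumes "Suc s < card (Jset a)" "idx a s < i" "i < idx a (Suc s)"
  shows "i \<notin> Jset a"
proof
  assume "i \<in> Jset a"
  then obtain t where "t < card (Jset a)" "idx a t = i"
    using Jset_eq_idx by blast
  then have "s < t" "t < Suc s"
    using assms idx_less_idx_iff by auto
  then show False
    by simp
qed

definition run_boundary :: "nat list \<Rightarrow> nat \<Rightarrow> bool" where
  "run_boundary a i \<longleftrightarrow> i = 0 \<or> i = length a \<or> a ! (i - 1) \<noteq> a ! i"

locale sorted_parity_strict =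
  fixes a :: "nat list"
  assumes sorted: "sorted a" and strict: "parity_strict a"
begin

lemma in_Jset_iff:
  assumes "i < length a"
  shows "i \<in> Jset a \<longleftrightarrow>
    \<not> (Suc i < length a \<and> a ! i = a ! Suc i) \<and> \<not> (0 < i \<and> a ! (i - 1) = a ! i)"
proof -
  let ?S = "{k. k < length a \<and> a ! k = a ! i}"
  have "count (mset a) v = card {k. k < length a \<and> a ! k = v}" for v
    by (simp add: count_mset count_list_eq_length_filter length_filter_conv_card eq_commute)
  then have "i \<in> Jset a \<longleftrightarrow> card ?S = 1"
    using assms by (simp add: Jset_def)
  also have "\<dots> \<longleftrightarrow> ?S = {i}"
    using assms by (metis (mono_tags, lifting) card_1_singletonE is_singletonI mem_Collect_eq singletonD is_singleton_altdef)
  also have "\<dots> \<longleftrightarrow> \<not> (Suc i < length a \<and> a ! i = a ! Suc i) \<and> \<not> (0 < i \<and> a ! (i - 1) = a ! i)"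
  proof
    assume S: "?S = {i}"
    show "\<not> (Suc i < length a \<and> a ! i = a ! Suc i) \<and> \<not> (0 < i \<and> a ! (i - 1) = a ! i)"
    proof (intro conjI notI)
      assume "Suc i < length a \<and> a ! i = a ! Suc i"
      then have "Suc i \<in> ?S"
        by simp
      then show False
        using S by simp
    next
      assume "0 < i \<and> a ! (i - 1) = a ! i"
      then have "i - 1 \<in> ?S"
        using assms by simp
      then show False
        using S \<open>0 < i \<and> _\<close> by auto
    qed
  next
    assume neighbours: "\<not> (Suc i < length a \<and> a ! i = a ! Suc i) \<and> \<not> (0 < i \<and> a ! (i - 1) = a ! i)"
    have "k = i" if "k < length a" "a ! k = a ! i" for k
    proof (rule ccontr)
      assume "k \<noteq> i"
      then consider "k < i" | "i < k"
        by linarith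
      then show False
      proof cases
        case 1
        then have "a ! k \<le> a ! (i - 1)" "a ! (i - 1) \<le> a ! i"
          using assms by (simp_all add: sorted_nth_mono[OF sorted])
        then show False
          using neighbours 1 that by auto
      next
        case 2
        then have "a ! i \<le> a ! Suc i" "a ! Suc i \<le> a ! k"
          using that(1) by (simp_all add: sorted_nth_mono[OF sorted])
        then show False
          using neighbours 2 that by auto
      qed
    qed
    then show "?S = {i}"
      using assms by auto
  qed
  finally show ?thesis .
qed

lemma strict_step: "i + 2 < length a \<Longrightarrow> a ! i < a ! (i + 2)"
  using strict by (simp add: parity_strict_def)

lemma even_boundary_plus_card_Jset:
  "i \<le> length a \<Longrightarrow> run_boundary a i \<Longrightarrow> even (i + card (Jset a \<inter> {..<i}))"
proof (induction i rule: less_induct)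
  case (less i)
  show ?case
  proof (cases i)
    case (Suc j)
    have j: "j < length a"
      using less.prems(1) Suc by simp
    show ?thesis
    proof (cases "j \<in> Jset a")
      case True
      then have "run_boundary a j"
        using in_Jset_iff[OF j] by (auto simp: run_boundary_def)
      moreover have "Jset a \<inter> {..<i} = insert j (Jset a \<inter> {..<j})"
        using True Suc by auto
      ultimately show ?thesis
        using less.IH[of j] Suc j finite_Jset by simp
    next
      case False
      then have "\<not> (Suc j < length a \<and> a ! j = a ! Suc j)"
        using less.prems(2) Suc by (auto simp: run_boundary_def)
      then have "0 < j" "a ! (j - 1) = a ! j"
        using False in_Jset_iff[OF j] by auto
      then obtain k where k: "j = Suc k"
        using gr0_conv_Suc by blast
      have "k \<notin> Jset a"
        using in_Jset_iff[of k] \<open>a ! (j - 1) = a ! j\<close> k j by auto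
      then have "Jset a \<inter> {..<i} = Jset a \<inter> {..<k}"
        using False Suc k by (auto simp: less_Suc_eq)
      moreover have "run_boundary a k"
        using strict_step[of "k - 1"] \<open>a ! (j - 1) = a ! j\<close> k j
        by (cases k) (auto simp: run_boundary_def)
      ultimately show ?thesis
        using less.IH[of k] Suc k j by simp
    qed
  qed simp
qed

lemma even_idx_plus: "s < card (Jset a) \<Longrightarrow> even (idx a s + s)"
  using even_boundary_plus_card_Jset[of "idx a s"] card_Jset_below_idx[of s a]
    idx_in_Jset[of s a] Jset_less_length in_Jset_iff
  by (force simp: run_boundary_def)

lemma even_length_plus_card_Jset: "even (length a + card (Jset a))"
proof -
  have "Jset a \<inter> {..<length a} = Jset a"
    using Jset_less_length by blast
  then show ?thesis
    using even_boundary_plus_card_Jset[of "length a"] by (simp add: run_boundary_def)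
qed

lemma equal_neighbour_between_idx:
  assumes s: "Suc s < card (Jset a)" and q: "idx a s < q" "q < idx a (Suc s)" "odd (q - idx a s)"
  shows "a ! q = a ! Suc q"
proof (rule ccontr)
  \<comment> \<open>Otherwise \<open>Suc q\<close> is a run boundary, and the parities at \<open>Suc q\<close> and at \<open>idx a s\<close> clash.\<close>
  assume neq: "a ! q \<noteq> a ! Suc q"
  have "idx a (Suc s) < length a"
    using idx_in_Jset[OF s] Jset_less_length by blast
  then have "Suc q < length a"
    using q by simp
  have "i \<notin> Jset a" if "idx a s < i" "i \<le> q" for i
    using not_in_Jset_between_idx[OF s] that q by simp
  then have "Jset a \<inter> {..<Suc q} = insert (idx a s) (Jset a \<inter> {..<idx a s})"
    using idx_in_Jset[of s a] s q by (auto simp: less_Suc_eq_le) (metis linorder_neqE_nat)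
  then have "even (Suc q + Suc s)"
    using even_boundary_plus_card_Jset[of "Suc q"] card_Jset_below_idx[of s a]
      \<open>Suc q < length a\<close> s neq finite_Jset
    by (simp add: run_boundary_def)
  moreover have "even (idx a s + s)"
    using even_idx_plus s by simp
  ultimately show False
    using q by simp
qed

end

locale odd_sorted_parity_strict = sorted_parity_strict +
  assumes odd_length: "odd (length a)"
begin

lemma card_Jset_eq: "card (Jset a) = 2 * MM a + 1"
proof -
  have "odd (card (Jset a))"
    using even_length_plus_card_Jset odd_length by simp
  then show ?thesis
    unfolding MM_def by (auto elim!: oddE)
qed

lemma idx_mod_2: "s \<le> 2 * MM a \<Longrightarrow> idx a s mod 2 = s mod 2"
  using even_idx_plus[of s] card_Jset_eq by (auto simp: mod2_eq_if)

lemma idx_Suc_eq: "s < 2 * MM a \<Longrightarrow> idx a (Suc s) = idx a s + 2 * mm a s + 1"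
  using idx_strict_mono[of s "Suc s" a] even_idx_plus[of s] even_idx_plus[of "Suc s"] card_Jset_eq
  unfolding mm_def by (auto elim!: evenE)

end

definition in_swap_block :: "nat list \<Rightarrow> nat set \<Rightarrow> nat \<Rightarrow> bool" where
  "in_swap_block a X p \<longleftrightarrow> (\<exists>s\<in>X. idx a s \<le> p \<and> p < idx a (Suc s))"

context odd_sorted_parity_strict
begin

lemma swap_block_bounds:
  assumes "odd s" "s < 2 * MM a"
  shows "odd (idx a s)" "even (idx a (Suc s))" "idx a s + 2 * mm a s + 1 = idx a (Suc s)"
  using idx_mod_2[of s] idx_mod_2[of "Suc s"] idx_Suc_eq[of s] assms
  by (simp_all add: mod2_eq_if split: if_splits)

lemma nth_aX:
  "i < length a \<Longrightarrow> aX a X ! i =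
    (if \<exists>s\<in>X. idx a s \<le> i \<and> i \<le> idx a s + 2 * mm a s + 1 \<and> even (i - idx a s) then a ! (i + 1)
     else if \<exists>s\<in>X. idx a s \<le> i \<and> i \<le> idx a s + 2 * mm a s + 1 \<and> odd (i - idx a s) then a ! (i - 1)
     else a ! i)"
  unfolding aX_def by (simp only: nth_map length_upt nth_upt diff_zero add_0)

context
  fixes X :: "nat set"
  assumes X: "X \<subseteq> {s. odd s \<and> s < 2 * MM a}"
begin

lemma nth_aX_0: "aX a X ! 0 = a ! 0"
proof -
  have "0 < idx a s" if "s \<in> X" for s
    using swap_block_bounds(1)[of s] X that by (auto intro: odd_pos)
  then have "\<not> (\<exists>s\<in>X. idx a s \<le> 0)"
    by fastforce
  moreover have "0 < length a"
    using odd_length by (rule odd_pos)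
  ultimately show ?thesis
    using nth_aX[of 0 X] by auto
qed

lemma nth_aX_odd:
  assumes "odd p" "p < length a"
  shows "aX a X ! p = (if in_swap_block a X p then a ! (p + 1) else a ! p)"
proof -
  have "idx a s \<le> p \<and> p \<le> idx a s + 2 * mm a s + 1 \<and> even (p - idx a s)
      \<longleftrightarrow> idx a s \<le> p \<and> p < idx a (Suc s)" if "s \<in> X" for s
    using swap_block_bounds[of s] X that assms(1) by (auto simp: le_less)
  moreover have "\<not> odd (p - idx a s)" if "s \<in> X" "idx a s \<le> p" for s
    using swap_block_bounds[of s] X that assms(1) by auto
  ultimately show ?thesis
    using nth_aX[OF assms(2)] unfolding in_swap_block_def by auto
qed

lemma nth_aX_even:
  assumes "odd p" "p + 1 < length a"
  shows "aX a X ! (p + 1) = (if in_swap_block a X p then a ! p else a ! (p + 1))"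
proof -
  have "\<not> (idx a s \<le> p + 1 \<and> even (p + 1 - idx a s))" if "s \<in> X" for s
    using swap_block_bounds[of s] X that assms(1) by auto
  moreover have "idx a s \<le> p + 1 \<and> p + 1 \<le> idx a s + 2 * mm a s + 1 \<and> odd (p + 1 - idx a s)
      \<longleftrightarrow> idx a s \<le> p \<and> p < idx a (Suc s)" if "s \<in> X" for s
    using swap_block_bounds[of s] X that assms(1) by (auto simp: le_Suc_eq)
  ultimately show ?thesis
    using nth_aX[OF assms(2)] unfolding in_swap_block_def by auto
qed

end

end

definition swap_set :: "nat list \<Rightarrow> nat list \<Rightarrow> nat set" where
  "swap_set a b = {s. odd s \<and> s < 2 * MM a \<and> b ! idx a s \<noteq> a ! idx a s}"

locale hat_rearrangement = odd_sorted_parity_strict +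
  fixes b :: "nat list"
  assumes b_in_E_set: "b \<in> E_set a" and mset_hat_eq: "mset (hat b) = mset (hat a)"
begin

lemma length_b: "length b = length a"
  using b_in_E_set by (simp add: E_set_def)

lemma strict_step_b: "i + 2 < length a \<Longrightarrow> b ! i < b ! (i + 2)"
  using b_in_E_set by (simp add: E_set_def parity_strict_def)

lemma nth_b_0: "b ! 0 = a ! 0"
  using hat_mset_eq_pairs_permuted(1) odd_length sorted b_in_E_set mset_hat_eq
  by (simp add: E_set_def)

lemma nth_b_pair:
  "odd p \<Longrightarrow> p + 1 < length a \<Longrightarrow>
    b ! p = a ! p \<and> b ! (p + 1) = a ! (p + 1) \<or> b ! p = a ! (p + 1) \<and> b ! (p + 1) = a ! p"
  using hat_mset_eq_pairs_permuted(2) odd_length sorted b_in_E_set mset_hat_eq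
  by (simp add: E_set_def)

lemma swap_forward:
  assumes s: "s \<in> swap_set a b"
  shows "odd p \<Longrightarrow> idx a s \<le> p \<Longrightarrow> p < idx a (Suc s) \<Longrightarrow> b ! p = a ! (p + 1) \<and> b ! (p + 1) = a ! p"
proof (induction p rule: less_induct)
  case (less p)
  have s': "odd s" "s < 2 * MM a" "b ! idx a s \<noteq> a ! idx a s"
    using s by (auto simp: swap_set_def)
  then have "Suc s < card (Jset a)"
    using card_Jset_eq by simp
  then have "idx a (Suc s) < length a"
    using idx_in_Jset Jset_less_length by blast
  moreover have "even (idx a (Suc s))"
    using swap_block_bounds(2) s' by simp
  ultimately have p: "p + 1 < length a"
    using less.prems by (metis Suc_eq_plus1 Suc_lessI le_less_trans less_imp_le_nat)
  show ?case
  proof (cases "p = idx a s")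
    case True
    then show ?thesis
      using nth_b_pair[OF less.prems(1) p] s'(3) by auto
  next
    case False
    then have "idx a s + 2 \<le> p"
      using less.prems swap_block_bounds(1)[OF s'(1,2)] by presburger
    define r where "r = p - 2"
    have r: "odd r" "idx a s \<le> r" "r < p" "p = r + 2"
      using \<open>idx a s + 2 \<le> p\<close> less.prems(1) unfolding r_def by auto
    have "b ! r = a ! (r + 1)"
      using less.IH[of r] r less.prems by simp
    moreover have "a ! (r + 1) = a ! (r + 2)"
      using equal_neighbour_between_idx[OF \<open>Suc s < card (Jset a)\<close>, of "r + 1"]
        r less.prems swap_block_bounds(1)[OF s'(1,2)] by simp
    moreover have "b ! r < b ! (r + 2)"
      using strict_step_b r p by simp
    ultimately show ?thesis
      \<comment> \<open>\<open>b ! r = a ! p\<close>, so by strictness of \<open>b\<close> the pair at \<open>p\<close> cannot be left in place.\<close>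
      using nth_b_pair[OF less.prems(1) p] r by auto
  qed
qed

lemma swap_at_Jset:
  assumes "odd p" "p \<in> Jset a" "b ! p \<noteq> a ! p"
  shows "in_swap_block a (swap_set a b) p"
proof -
  obtain s where s: "s < card (Jset a)" "idx a s = p"
    using Jset_eq_idx assms(2) by blast
  then have "odd s"
    using idx_mod_2[of s] card_Jset_eq assms(1) by (simp add: odd_iff_mod_2_eq_one)
  then have "s < 2 * MM a"
    using s(1) card_Jset_eq by (cases "s = 2 * MM a") auto
  then have "s \<in> swap_set a b" "p < idx a (Suc s)"
    using \<open>odd s\<close> s assms(3) idx_strict_mono[of s "Suc s" a] card_Jset_eq
    by (auto simp: swap_set_def)
  then show ?thesis
    using s(2) by (auto simp: in_swap_block_def)
qed

text \<open>Outside \<open>Jset a\<close>, strictness of \<open>b\<close> at \<open>p - 1\<close> carries a swap at \<open>p\<close> across the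
  equal pair \<open>a ! (p - 1) = a ! p\<close> to a genuine swap at \<open>p - 2\<close>.\<close>

lemma swap_propagates_back:
  assumes "odd p" "p + 1 < length a" "b ! p \<noteq> a ! p" "p \<notin> Jset a"
  shows "2 < p" "a ! (p - 1) = a ! p" "b ! (p - 2) \<noteq> a ! (p - 2)"
proof -
  have swap: "b ! p = a ! (p + 1)" "b ! (p + 1) = a ! p"
    using nth_b_pair[OF assms(1,2)] assms(3) by auto
  then have "0 < p" "a ! (p - 1) = a ! p"
    using assms(2-4) in_Jset_iff[of p] by auto
  then show "a ! (p - 1) = a ! p"
    by simp
  show "2 < p"
  proof (rule ccontr)
    assume "\<not> 2 < p"
    then have "p = 1"
      using \<open>0 < p\<close> assms(1) by presburger
    then have "b ! 0 = b ! 2"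
      using nth_b_0 swap \<open>a ! (p - 1) = a ! p\<close> by (simp add: numeral_2_eq_2)
    then show False
      using strict_step_b[of 0] assms(2) \<open>p = 1\<close> by (simp add: numeral_2_eq_2)
  qed
  define r where "r = p - 2"
  have r: "odd r" "p = r + 2"
    using \<open>2 < p\<close> assms(1) unfolding r_def by presburger+
  have "b ! (r + 1) < a ! (r + 1)"
    using strict_step_b[of "r + 1"] swap \<open>a ! (p - 1) = a ! p\<close> r assms(2)
    by (simp add: numeral_3_eq_3)
  then have "b ! r = a ! (r + 1)"
    using nth_b_pair[of r] r assms(2) by auto
  moreover have "a ! r < a ! (r + 2)"
    using strict_step r assms(2) by simp
  ultimately show "b ! (p - 2) \<noteq> a ! (p - 2)"
    using \<open>a ! (p - 1) = a ! p\<close> r by (simp add: r_def[symmetric])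
qed

lemma swap_backward:
  "odd p \<Longrightarrow> p + 1 < length a \<Longrightarrow> b ! p \<noteq> a ! p \<Longrightarrow> in_swap_block a (swap_set a b) p"
proof (induction p rule: less_induct)
  case (less p)
  show ?case
  proof (cases "p \<in> Jset a")
    case True
    then show ?thesis
      using swap_at_Jset less.prems by blast
  next
    case False
    note earlier = swap_propagates_back[OF less.prems False]
    have "odd (p - 2)" "p - 2 + 1 < length a"
      using earlier(1) less.prems(1,2) by auto
    then have "in_swap_block a (swap_set a b) (p - 2)"
      using less.IH[of "p - 2"] earlier(1,3) by simp
    then obtain s where s: "s \<in> swap_set a b" "idx a s \<le> p - 2" "p - 2 < idx a (Suc s)"
      unfolding in_swap_block_def by blast
    then have "idx a (Suc s) \<in> Jset a"
      using idx_in_Jset card_Jset_eq by (simp add: swap_set_def)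
    moreover have "p - 1 \<notin> Jset a"
      using in_Jset_iff[of "p - 1"] earlier(1,2) less.prems(2) by simp
    ultimately have "idx a (Suc s) \<noteq> p - 1" "idx a (Suc s) \<noteq> p"
      using False by auto
    then have "p < idx a (Suc s)"
      using s(3) by linarith
    then show ?thesis
      using s unfolding in_swap_block_def by (intro bexI[of _ s]) auto
  qed
qed

lemma nth_b_odd:
  assumes "odd p" "p + 1 < length a"
  shows "b ! p = (if in_swap_block a (swap_set a b) p then a ! (p + 1) else a ! p)"
    and "b ! (p + 1) = (if in_swap_block a (swap_set a b) p then a ! p else a ! (p + 1))"
proof -
  have "b ! p = (if in_swap_block a (swap_set a b) p then a ! (p + 1) else a ! p)
      \<and> b ! (p + 1) = (if in_swap_block a (swap_set a b) p then a ! p else a ! (p + 1))"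
  proof (cases "in_swap_block a (swap_set a b) p")
    case True
    then show ?thesis
      using swap_forward assms(1) by (auto simp: in_swap_block_def)
  next
    case False
    then have "b ! p = a ! p"
      using swap_backward[OF assms] by blast
    then show ?thesis
      using False nth_b_pair[OF assms] by auto
  qed
  then show "b ! p = (if in_swap_block a (swap_set a b) p then a ! (p + 1) else a ! p)"
    and "b ! (p + 1) = (if in_swap_block a (swap_set a b) p then a ! p else a ! (p + 1))"
    by simp_all
qed

lemma b_eq_aX: "b = aX a (swap_set a b)"
proof (rule nth_equalityI)
  show "length b = length (aX a (swap_set a b))"
    using length_b by (simp add: aX_def)
next
  have X: "swap_set a b \<subseteq> {s. odd s \<and> s < 2 * MM a}"
    by (auto simp: swap_set_def)
  fix i assume "i < length b"
  then have i: "i < length a"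
    using length_b by simp
  show "b ! i = aX a (swap_set a b) ! i"
  proof (cases "odd i")
    case True
    moreover have "Suc i \<noteq> length a"
      using odd_length True by (metis even_Suc)
    ultimately show ?thesis
      using nth_b_odd(1)[of i] nth_aX_odd[OF X True i] i by simp
  next
    case False
    show ?thesis
    proof (cases i)
      case 0
      then show ?thesis
        using nth_b_0 nth_aX_0[OF X] by simp
    next
      case (Suc p)
      then have "odd p"
        using False by simp
      then show ?thesis
        using nth_b_odd(2)[of p] nth_aX_even[OF X, of p] i Suc by simp
    qed
  qed
qed

end

theorem lemma1p2:
  fixes N :: nat and a b :: "nat list"
  assumes "even N"
    and "length a = N + 1"
    and "sorted a"
    and "parity_strict a"
    and "b \<in> E_set a"
    and "mset (hat b) = mset (hat a)"
  shows "card (Jset a) = 2 * MM a + 1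
       \<and> (\<forall>s \<le> 2 * MM a. idx a s mod 2 = s mod 2)
       \<and> (\<forall>s < 2 * MM a. idx a (s + 1) = idx a s + 2 * mm a s + 1)
       \<and> (\<exists>X. X \<subseteq> {s. odd s \<and> s \<le> 2 * MM a - 1} \<and> b = aX a X)"
proof -
  interpret hat_rearrangement a b
    using assms by unfold_locales simp_all
  have "swap_set a b \<subseteq> {s. odd s \<and> s \<le> 2 * MM a - 1}"
    by (auto simp: swap_set_def)
  then show ?thesis
    using card_Jset_eq idx_mod_2 idx_Suc_eq b_eq_aX by auto
qed

end
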